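(* Let $\dim V=2$ and assume $V$ is a quantum linear space, i.e. $p_{12}p_{21}=1$. Then $$\mathfrak{L}^-(V)=\operatorname{span}\big\{x_1,\;x_2,\;x_2^{\alpha_2}x_1^{\alpha_1}\ :\ 1\le\alpha_2<N_2,\ 1\le\alpha_1<N_1,\ \operatorname{ord}(p_{12})\nmid\alpha_2\ \text{or}\ \operatorname{ord}(p_{12})\nmid\alpha_1\big\},$$ where for $i=1,2$, $N_i:=\operatorname{ord}(p_{ii})$ if $1<\operatorname{ord}(p_{ii})<\infty$, and $N_i:=\infty$ if $p_{ii}=1$ or $p_{ii}$ is not a root of unity.
   Context: $V$ is a braided vector space of diagonal type over an algebraically closed field $F$ of characteristic $0$ with basis $x_1,x_2$, braiding $C(x_i\otimes x_j)=q_{ij}x_j\otimes x_i$, $p_{ij}:=q_{ij}$, and Nichols algebra $\mathfrak{B}(V)$. $\mathfrak{L}^-(V)$ is the Lie subalgebra of $\mathfrak{B}(V)$ generated by $V$ under the commutator $[a,b]^-=ab-ba$. $\operatorname{ord}(a)$ is the multiplicative order of $a\in F^*$ ($\infty$ if $a$ is not a root of unity), and by convention $\infty$ does not divide any integer. *)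

theory Defs
  imports "HOL-Combinatorics.Permutations" "HOL-Computational_Algebra.Polynomial" "HOL-Library.Extended_Nat"
begin

text \<open>Tensor algebra T(V) of V = span{x_1,x_2}: elements are coefficient functions on
  words (lists over the letters 1 and 2), finitely supported.\<close>

type_synonym 'a tens = "nat list \<Rightarrow> 'a"

definition letters :: "nat set" where "letters = {1, 2}"

definition tensor_alg :: "'a::field tens set" where
  "tensor_alg = {f. finite {w. f w \<noteq> 0} \<and> (\<forall>w. f w \<noteq> 0 \<longrightarrow> set w \<subseteq> letters)}"

definition tzero :: "'a::field tens" where "tzero = (\<lambda>w. 0)"
definition tadd :: "'a::field tens \<Rightarrow> 'a tens \<Rightarrow> 'a tens" where
  "tadd f g = (\<lambda>w. f w + g w)"
definition tsmult :: "'a::field \<Rightarrow> 'a tens \<Rightarrow> 'a tens" where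
  "tsmult c f = (\<lambda>w. c * f w)"
definition tmult :: "'a::field tens \<Rightarrow> 'a tens \<Rightarrow> 'a tens" where
  "tmult f g = (\<lambda>w. \<Sum>k\<le>length w. f (take k w) * g (drop k w))"
definition tcomm :: "'a::field tens \<Rightarrow> 'a tens \<Rightarrow> 'a tens" where
  "tcomm f g = (\<lambda>w. tmult f g w - tmult g f w)"

definition mono :: "nat list \<Rightarrow> 'a::field tens" where
  "mono v = (\<lambda>w. if w = v then 1 else 0)"

definition gen :: "nat \<Rightarrow> 'a::field tens" where "gen i = mono [i]"

inductive_set tspan :: "'a::field tens set \<Rightarrow> 'a tens set" for S where
  zero: "tzero \<in> tspan S"
| step: "a \<in> tspan S \<Longrightarrow> s \<in> S \<Longrightarrow> tadd a (tsmult c s) \<in> tspan S"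

inductive_set lie_gen :: "'a::field tens set" where
  gen: "i \<in> letters \<Longrightarrow> gen i \<in> lie_gen"
| add: "a \<in> lie_gen \<Longrightarrow> b \<in> lie_gen \<Longrightarrow> tadd a b \<in> lie_gen"
| smult: "a \<in> lie_gen \<Longrightarrow> tsmult c a \<in> lie_gen"
| comm: "a \<in> lie_gen \<Longrightarrow> b \<in> lie_gen \<Longrightarrow> tcomm a b \<in> lie_gen"

definition words :: "nat \<Rightarrow> nat list set" where
  "words n = {w. length w = n \<and> set w \<subseteq> letters}"

text \<open>Braided (quantum) symmetrizer Omega_n = sum over sigma in S_n of T_sigma, for the diagonal
  braiding c(x_i x_j) = q i j x_j x_i.  For a permutation tau of {0..<n} the word w is sent to
  the word v = w o tau with coefficient the product of q (w!tau p) (w!tau r) over the pairs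
  r < p with tau r > tau p (i.e. the letters that are braided past each other).\<close>
definition braid_coef :: "(nat \<Rightarrow> nat \<Rightarrow> 'a::field) \<Rightarrow> nat \<Rightarrow> (nat \<Rightarrow> nat) \<Rightarrow> nat list \<Rightarrow> 'a" where
  "braid_coef q n \<tau> w =
     (\<Prod>(r, p) \<in> {(r, p). r < p \<and> p < n \<and> \<tau> r > \<tau> p}. q (w ! \<tau> p) (w ! \<tau> r))"

definition permute_word :: "nat \<Rightarrow> (nat \<Rightarrow> nat) \<Rightarrow> nat list \<Rightarrow> nat list" where
  "permute_word n \<tau> w = map (\<lambda>p. w ! \<tau> p) [0..<n]"

definition symmetrizer :: "(nat \<Rightarrow> nat \<Rightarrow> 'a::field) \<Rightarrow> nat \<Rightarrow> 'a tens \<Rightarrow> 'a tens" where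
  "symmetrizer q n f = (\<lambda>v. \<Sum>w\<in>words n. f w *
      (\<Sum>\<tau>\<in>{\<tau>. \<tau> permutes {..<n}}.
          if permute_word n \<tau> w = v then braid_coef q n \<tau> w else 0))"

text \<open>The defining ideal of the Nichols algebra: B(V) = T(V) / (direct sum of ker Omega_n).\<close>
definition nichols_ideal :: "(nat \<Rightarrow> nat \<Rightarrow> 'a::field) \<Rightarrow> 'a tens set" where
  "nichols_ideal q = {f \<in> tensor_alg. \<forall>n. symmetrizer q n f = tzero}"

text \<open>Full preimage in T(V) of the image of A in B(V).\<close>
definition mod_nichols :: "(nat \<Rightarrow> nat \<Rightarrow> 'a::field) \<Rightarrow> 'a tens set \<Rightarrow> 'a tens set" where
  "mod_nichols q A = {tadd a i | a i. a \<in> A \<and> i \<in> nichols_ideal q}"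

definition ordr :: "'a::field \<Rightarrow> enat" where
  "ordr a = (if \<exists>n>0. a ^ n = 1 then enat (LEAST n. n > 0 \<and> a ^ n = 1) else \<infinity>)"

definition ord_dvd :: "'a::field \<Rightarrow> nat \<Rightarrow> bool" where
  "ord_dvd a k = (\<exists>n. ordr a = enat n \<and> n dvd k)"

definition Nbound :: "'a::field \<Rightarrow> enat" where
  "Nbound a = (if 1 < ordr a \<and> ordr a < \<infinity> then ordr a else \<infinity>)"

definition qls_spanning_set :: "(nat \<Rightarrow> nat \<Rightarrow> 'a::field) \<Rightarrow> 'a tens set" where
  "qls_spanning_set q = {gen 1, gen 2} \<union>
     {mono (replicate a2 2 @ replicate a1 1) | a2 a1.
        1 \<le> a2 \<and> enat a2 < Nbound (q 2 2) \<and> 1 \<le> a1 \<and> enat a1 < Nbound (q 1 1) \<and>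
        (\<not> ord_dvd (q 1 2) a2 \<or> \<not> ord_dvd (q 1 2) a1)}"

end

theory Submission
  imports Defs
begin

text \<open>Send a word to the quantum plane \<open>x\<^sub>1 x\<^sub>2 = p\<^sub>1\<^sub>2 x\<^sub>2 x\<^sub>1\<close> by sorting it into
  \<open>x\<^sub>2^a x\<^sub>1^b\<close>, picking up one factor \<open>p\<^sub>1\<^sub>2\<close> for each letter \<open>1\<close> standing before a letter \<open>2\<close>.
  For a quantum linear space the braided symmetrizer on words of bidegree \<open>(a, b)\<close> factors
  through this map: its matrix coefficient from \<open>w\<close> to \<open>v\<close> is
  \<open>p\<^sub>1\<^sub>2^inv(w) p\<^sub>2\<^sub>1^inv(v) [a]!\<^sub>p\<^sub>2\<^sub>2 [b]!\<^sub>p\<^sub>1\<^sub>1\<close> (induction on the length, removing the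
  letter that ends up last).  Hence an element lies in the Nichols ideal once its image in the
  quantum plane vanishes in all bidegrees with \<open>a < N\<^sub>2\<close> and \<open>b < N\<^sub>1\<close>.

  The map to the quantum plane is multiplicative, so it sends commutators to \<open>p\<^sub>1\<^sub>2\<close>-commutators,
  and these vanish between monomials of total bidegree \<open>(a, b)\<close> with \<open>p\<^sub>1\<^sub>2^a = p\<^sub>1\<^sub>2^b = 1\<close>.
  Thus Lie elements live in the bidegrees \<open>(1, 0)\<close>, \<open>(0, 1)\<close> and those with \<open>ord p\<^sub>1\<^sub>2\<close> not
  dividing \<open>a\<close> or \<open>b\<close>; conversely, iterated brackets of \<open>x\<^sub>2\<close> with \<open>x\<^sub>1\<close> reach every such
  bidegree with nonzero coefficient.  Modulo the Nichols ideal both sides therefore consist of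
  the combinations of the monomials \<open>x\<^sub>2^a x\<^sub>1^b\<close> in these bidegrees.\<close>

section \<open>Permutations of an initial segment\<close>

definition succ_above :: "nat \<Rightarrow> nat \<Rightarrow> nat" where
  "succ_above j t = (if t < j then t else Suc t)"

definition pred_above :: "nat \<Rightarrow> nat \<Rightarrow> nat" where
  "pred_above j t = (if t < j then t else t - 1)"

text \<open>A permutation \<open>t\<close> of \<open>{..<Suc n}\<close> is determined by \<open>t n\<close> and by the permutation of
  \<open>{..<n}\<close> obtained by deleting the position \<open>n\<close> and the value \<open>t n\<close> and closing the gaps.\<close>

definition perm_extend :: "nat \<Rightarrow> nat \<Rightarrow> (nat \<Rightarrow> nat) \<Rightarrow> nat \<Rightarrow> nat" where
  "perm_extend n j s p = (if p < n then succ_above j (s p) else if p = n then j else p)"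

definition perm_restrict :: "nat \<Rightarrow> (nat \<Rightarrow> nat) \<Rightarrow> nat \<Rightarrow> nat" where
  "perm_restrict n t p = (if p < n then pred_above (t n) (t p) else p)"

lemma perm_extend_permutes:
  assumes j: "j \<le> n" and s: "s permutes {..<n}"
  shows "perm_extend n j s permutes {..<Suc n}"
proof (rule bij_imp_permutes)
  have s_less: "\<And>x. x < n \<Longrightarrow> s x < n" using permutes_in_image[OF s] by simp
  have s_inj: "\<And>x y. s x = s y \<Longrightarrow> x = y" using permutes_inj[OF s] by (meson injD)
  have image: "perm_extend n j s ` {..<Suc n} \<subseteq> {..<Suc n}"
    using s_less j by (auto simp: perm_extend_def succ_above_def less_Suc_eq)
  have inj: "inj_on (perm_extend n j s) {..<Suc n}"
    by (rule inj_onI) (auto simp: perm_extend_def succ_above_def less_Suc_eq dest: s_inj split: if_splits)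
  show "bij_betw (perm_extend n j s) {..<Suc n} {..<Suc n}"
    using endo_inj_surj[OF _ image inj] inj by (simp add: bij_betw_def)
  show "\<And>x. x \<notin> {..<Suc n} \<Longrightarrow> perm_extend n j s x = x" by (simp add: perm_extend_def)
qed

lemma perm_restrict_permutes:
  assumes t: "t permutes {..<Suc n}"
  shows "perm_restrict n t permutes {..<n}"
proof (rule bij_imp_permutes)
  have t_less: "\<And>x. x < Suc n \<Longrightarrow> t x < Suc n" using permutes_in_image[OF t] by auto
  have t_inj: "\<And>x y. t x = t y \<Longrightarrow> x = y" using permutes_inj[OF t] by (meson injD)
  have image: "perm_restrict n t ` {..<n} \<subseteq> {..<n}"
  proof
    fix y assume "y \<in> perm_restrict n t ` {..<n}"
    then obtain x where x: "x < n" "y = perm_restrict n t x" by auto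
    have "t x \<noteq> t n" using t_inj x by auto
    moreover have "t x < Suc n" "t n < Suc n" using t_less x by auto
    ultimately show "y \<in> {..<n}" using x by (auto simp: perm_restrict_def pred_above_def)
  qed
  have inj: "inj_on (perm_restrict n t) {..<n}"
  proof (rule inj_onI)
    fix x y assume x: "x \<in> {..<n}" and y: "y \<in> {..<n}"
      and eq: "perm_restrict n t x = perm_restrict n t y"
    have "t x \<noteq> t n" "t y \<noteq> t n" using t_inj x y by auto
    then have "t x = t y" using eq x y by (auto simp: perm_restrict_def pred_above_def split: if_splits)
    then show "x = y" using t_inj by auto
  qed
  show "bij_betw (perm_restrict n t) {..<n} {..<n}"
    using endo_inj_surj[OF _ image inj] inj by (simp add: bij_betw_def)
  show "\<And>x. x \<notin> {..<n} \<Longrightarrow> perm_restrict n t x = x" by (auto simp: perm_restrict_def)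
qed

lemma perm_extend_restrict:
  assumes t: "t permutes {..<Suc n}"
  shows "perm_extend n (t n) (perm_restrict n t) = t"
proof
  fix p
  have t_inj: "\<And>x y. t x = t y \<Longrightarrow> x = y" using permutes_inj[OF t] by (meson injD)
  show "perm_extend n (t n) (perm_restrict n t) p = t p"
  proof (cases "p < n")
    case True
    then have "t p \<noteq> t n" using t_inj by auto
    then show ?thesis using True
      by (auto simp: perm_extend_def perm_restrict_def succ_above_def pred_above_def)
  next
    case False
    then show ?thesis using permutes_not_in[OF t, of p] by (auto simp: perm_extend_def perm_restrict_def)
  qed
qed

lemma perm_restrict_extend:
  assumes s: "s permutes {..<n}"
  shows "perm_restrict n (perm_extend n j s) = s"
proof
  fix p show "perm_restrict n (perm_extend n j s) p = s p"
    using permutes_not_in[OF s, of p]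
    by (auto simp: perm_extend_def perm_restrict_def succ_above_def pred_above_def)
qed

lemma sum_permutes_Suc:
  "(\<Sum>t\<in>{t. t permutes {..<Suc n}}. F t) =
   (\<Sum>j\<le>n. \<Sum>s\<in>{s. s permutes {..<n}}. F (perm_extend n j s))"
proof -
  let ?A = "{..n} \<times> {s. s permutes {..<n}}"
  have "bij_betw (\<lambda>(j, s). perm_extend n j s) ?A {t. t permutes {..<Suc n}}"
  proof (rule bij_betw_byWitness[where f' = "\<lambda>t. (t n, perm_restrict n t)"])
    show "\<forall>a\<in>?A. (\<lambda>t. (t n, perm_restrict n t)) ((\<lambda>(j, s). perm_extend n j s) a) = a"
      by (auto simp: perm_restrict_extend) (simp add: perm_extend_def)
    show "\<forall>t\<in>{t. t permutes {..<Suc n}}.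
        (\<lambda>(j, s). perm_extend n j s) ((\<lambda>t. (t n, perm_restrict n t)) t) = t"
      by (simp add: perm_extend_restrict)
    show "(\<lambda>(j, s). perm_extend n j s) ` ?A \<subseteq> {t. t permutes {..<Suc n}}"
      by (auto intro: perm_extend_permutes)
    show "(\<lambda>t. (t n, perm_restrict n t)) ` {t. t permutes {..<Suc n}} \<subseteq> ?A"
      using permutes_in_image[of _ "{..<Suc n}" n] perm_restrict_permutes
      by (auto simp: less_Suc_eq_le)
  qed
  then have "(\<Sum>t\<in>{t. t permutes {..<Suc n}}. F t) = (\<Sum>(j, s)\<in>?A. F (perm_extend n j s))"
    by (simp add: sum.reindex_bij_betw[symmetric] split_def)
  also have "\<dots> = (\<Sum>j\<le>n. \<Sum>s\<in>{s. s permutes {..<n}}. F (perm_extend n j s))"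
    by (rule sum.cartesian_product[symmetric])
  finally show ?thesis .
qed

section \<open>The symmetrizer on words\<close>

definition remove_nth :: "nat \<Rightarrow> 'b list \<Rightarrow> 'b list" where
  "remove_nth j w = take j w @ drop (Suc j) w"

lemma length_remove_nth: "j < length w \<Longrightarrow> length (remove_nth j w) = length w - 1"
  by (simp add: remove_nth_def)

lemma nth_remove_nth:
  "j < length w \<Longrightarrow> i < length w - 1 \<Longrightarrow> remove_nth j w ! i = w ! succ_above j i"
  by (auto simp: remove_nth_def succ_above_def nth_append min_def)

lemma set_remove_nth_subset: "set (remove_nth j w) \<subseteq> set w"
  by (auto simp: remove_nth_def dest: in_set_takeD in_set_dropD)

lemma remove_nth_in_words: "w \<in> words (Suc n) \<Longrightarrow> j \<le> n \<Longrightarrow> remove_nth j w \<in> words n"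
  using set_remove_nth_subset[of j w] length_remove_nth[of j w] by (auto simp: words_def)

lemma permute_word_perm_extend:
  assumes w: "length w = Suc n" and j: "j \<le> n" and s: "s permutes {..<n}"
  shows "permute_word (Suc n) (perm_extend n j s) w = permute_word n s (remove_nth j w) @ [w ! j]"
proof -
  have "w ! perm_extend n j s p = remove_nth j w ! s p" if "p < n" for p
    using that permutes_in_image[OF s, of p] w j by (simp add: perm_extend_def nth_remove_nth)
  then show ?thesis by (simp add: permute_word_def perm_extend_def)
qed

text \<open>The letter moved to the end crosses exactly the letters to its right.\<close>

lemma braid_coef_perm_extend:
  assumes w: "length w = Suc n" and j: "j \<le> n" and s: "s permutes {..<n}"
  shows "braid_coef q (Suc n) (perm_extend n j s) w =
         braid_coef q n s (remove_nth j w) * (\<Prod>i\<in>{j..<n}. q (w ! j) (w ! Suc i))"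
proof -
  let ?t = "perm_extend n j s"
  have s_less: "\<And>x. x < n \<Longrightarrow> s x < n" using permutes_in_image[OF s] by auto
  let ?I1 = "{(r, p). r < p \<and> p < n \<and> s r > s p}"
  let ?I2 = "(\<lambda>r. (r, n)) ` {r. r < n \<and> s r \<ge> j}"
  have "(r < p \<and> p < Suc n \<and> ?t r > ?t p) \<longleftrightarrow> (r, p) \<in> ?I1 \<union> ?I2" for r p
    using s_less[of r] s_less[of p]
    by (cases "p < n") (auto simp: perm_extend_def succ_above_def split: if_splits)
  then have split: "{(r, p). r < p \<and> p < Suc n \<and> ?t r > ?t p} = ?I1 \<union> ?I2"
    by blast
  have fin1: "finite ?I1"
    by (rule finite_subset[of _ "{..<n} \<times> {..<n}"]) auto
  have "braid_coef q (Suc n) ?t w =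
        (\<Prod>(r, p)\<in>?I1. q (w ! ?t p) (w ! ?t r)) * (\<Prod>(r, p)\<in>?I2. q (w ! ?t p) (w ! ?t r))"
    unfolding braid_coef_def split by (rule prod.union_disjoint[OF fin1]) auto
  also have "(\<Prod>(r, p)\<in>?I1. q (w ! ?t p) (w ! ?t r)) = braid_coef q n s (remove_nth j w)"
    unfolding braid_coef_def
    by (rule prod.cong[OF refl], clarify)
      (use s_less w j in \<open>simp add: perm_extend_def nth_remove_nth\<close>)
  also have "(\<Prod>(r, p)\<in>?I2. q (w ! ?t p) (w ! ?t r)) =
      (\<Prod>r\<in>{r. r < n \<and> s r \<ge> j}. q (w ! j) (w ! Suc (s r)))"
    by (subst prod.reindex) (auto simp: inj_on_def perm_extend_def succ_above_def intro!: prod.cong)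
  also have "\<dots> = (\<Prod>i\<in>{j..<n}. q (w ! j) (w ! Suc i))"
  proof (rule prod.reindex_bij_betw)
    have "s ` {r. r < n \<and> j \<le> s r} = {i \<in> s ` {..<n}. j \<le> i}" by auto
    also have "\<dots> = {j..<n}" using permutes_image[OF s] by auto
    finally show "bij_betw s {r. r < n \<and> j \<le> s r} {j..<n}"
      using permutes_inj[OF s] by (auto simp: bij_betw_def inj_on_def dest: injD)
  qed
  finally show ?thesis .
qed

definition symm_coef :: "(nat \<Rightarrow> nat \<Rightarrow> 'a::field) \<Rightarrow> nat \<Rightarrow> nat list \<Rightarrow> nat list \<Rightarrow> 'a" where
  "symm_coef q n w v =
     (\<Sum>t\<in>{t. t permutes {..<n}}. if permute_word n t w = v then braid_coef q n t w else 0)"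

lemma symmetrizer_eq_sum_symm_coef: "symmetrizer q n f v = (\<Sum>w\<in>words n. f w * symm_coef q n w v)"
  by (simp add: symmetrizer_def symm_coef_def)

lemma symm_coef_snoc:
  assumes w: "length w = Suc n"
  shows "symm_coef q (Suc n) w (v @ [x]) =
    (\<Sum>j\<le>n. if w ! j = x
             then (\<Prod>i\<in>{j..<n}. q (w ! j) (w ! Suc i)) * symm_coef q n (remove_nth j w) v else 0)"
proof -
  have "(\<Sum>s\<in>{s. s permutes {..<n}}.
          if permute_word (Suc n) (perm_extend n j s) w = v @ [x]
          then braid_coef q (Suc n) (perm_extend n j s) w else 0)
      = (if w ! j = x
         then (\<Prod>i\<in>{j..<n}. q (w ! j) (w ! Suc i)) * symm_coef q n (remove_nth j w) v else 0)"
    if j: "j \<le> n" for j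
    unfolding symm_coef_def sum_distrib_left
    using permute_word_perm_extend[OF w j] braid_coef_perm_extend[OF w j, of _ q]
    by (auto simp: mult.commute intro!: sum.cong)
  then show ?thesis
    unfolding symm_coef_def sum_permutes_Suc by (intro sum.cong) auto
qed

text \<open>Sorting \<open>w\<close> into \<open>x\<^sub>2^a x\<^sub>1^b\<close> braids each pair counted by \<open>inversions w\<close> once.\<close>

fun inversions :: "nat list \<Rightarrow> nat" where
  "inversions [] = 0"
| "inversions (c # w) = (if c = 1 then count_list w 2 else 0) + inversions w"

lemma inversions_append:
  "inversions (u @ u') = inversions u + inversions u' + count_list u 1 * count_list u' 2"
  by (induction u) (auto simp: algebra_simps)

definition q_int :: "'a::field \<Rightarrow> nat \<Rightarrow> 'a" where
  "q_int y k = (\<Sum>t<k. y ^ t)"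

definition q_fact :: "'a::field \<Rightarrow> nat \<Rightarrow> 'a" where
  "q_fact y k = (\<Prod>i\<in>{1..k}. q_int y i)"

lemma q_fact_0 [simp]: "q_fact y 0 = 1"
  by (simp add: q_fact_def)

lemma q_fact_Suc: "q_fact y (Suc k) = q_fact y k * q_int y (Suc k)"
  by (simp add: q_fact_def prod.cl_ivl_Suc)

definition bideg_qfact :: "(nat \<Rightarrow> nat \<Rightarrow> 'a::field) \<Rightarrow> nat \<Rightarrow> nat \<Rightarrow> 'a" where
  "bideg_qfact q a b = q_fact (q 2 2) a * q_fact (q 1 1) b"

lemma sum_positions_q_int:
  "(\<Sum>j<length w. if w ! j = x then y ^ count_list (drop (Suc j) w) x else 0) =
   q_int y (count_list w x)"
proof (induction w)
  case Nil
  then show ?case by (simp add: q_int_def)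
next
  case (Cons c w)
  define F where "F = (\<lambda>j. if (c # w) ! j = x then y ^ count_list (drop (Suc j) (c # w)) x else 0)"
  have "(\<Sum>j<length (c # w). F j) = F 0 + (\<Sum>j<length w. F (Suc j))"
    by (simp add: sum.lessThan_Suc_shift del: sum.lessThan_Suc)
  also have "(\<Sum>j<length w. F (Suc j)) = q_int y (count_list w x)"
    unfolding Cons[symmetric] by (rule sum.cong) (auto simp: F_def)
  finally show ?case by (simp add: q_int_def F_def)
qed

lemma count_list_letters: "set w \<subseteq> letters \<Longrightarrow> count_list w 1 + count_list w 2 = length w"
  by (induction w) (auto simp: letters_def)

lemma prod_list_map_letters:
  fixes g :: "nat \<Rightarrow> 'a::comm_monoid_mult"
  shows "set B \<subseteq> letters \<Longrightarrow> prod_list (map g B) = g 1 ^ count_list B 1 * g 2 ^ count_list B 2"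
  by (induction B) (auto simp: letters_def ac_simps)

lemma prod_nth_Suc_eq_prod_list_drop:
  assumes "length w = Suc n" and "j \<le> n"
  shows "(\<Prod>i\<in>{j..<n}. g (w ! Suc i)) = prod_list (map g (drop (Suc j) w))"
proof -
  have "drop (Suc j) w = map (\<lambda>i. w ! Suc i) [j..<n]"
    by (rule nth_equalityI) (use assms in auto)
  moreover have "(\<Prod>i\<in>{j..<n}. g (w ! Suc i)) = prod_list (map (\<lambda>i. g (w ! Suc i)) [j..<n])"
    using prod.distinct_set_conv_list[of "[j..<n]" "\<lambda>i. g (w ! Suc i)"] by simp
  ultimately show ?thesis by (simp add: comp_def)
qed

lemma words_Suc_snocE:
  assumes "v \<in> words (Suc n)"
  obtains v0 x where "v = v0 @ [x]" "v0 \<in> words n" "x \<in> letters"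
proof -
  have "v \<noteq> []" using assms by (auto simp: words_def)
  then obtain v0 x where "v = v0 @ [x]" by (metis rev_exhaust)
  then show ?thesis using that assms by (auto simp: words_def)
qed

text \<open>Moving the letter \<open>x\<close> from between \<open>A\<close> and \<open>B\<close> to the end of the target word: the braiding
  factors of \<open>x\<close> past \<open>B\<close> are absorbed into the inversion weights, using \<open>p\<^sub>1\<^sub>2 p\<^sub>2\<^sub>1 = 1\<close>.\<close>

lemma braid_factor_move_letter:
  fixes q :: "nat \<Rightarrow> nat \<Rightarrow> 'a::field"
  assumes ql: "q 1 2 * q 2 1 = 1" and x: "x \<in> letters"
    and v: "count_list v 1 = count_list A 1 + count_list B 1"
  shows "q x 1 ^ count_list B 1 * q x 2 ^ count_list B 2 *
           (q 1 2 ^ inversions (A @ B) * q 2 1 ^ inversions v) =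
         q 1 2 ^ inversions (A @ x # B) * q 2 1 ^ inversions (v @ [x]) * q x x ^ count_list B x"
proof -
  have cancel: "q 1 2 ^ k * q 2 1 ^ k = 1" for k
    by (metis power_mult_distrib ql power_one)
  consider "x = 1" | "x = 2" using x by (auto simp: letters_def)
  then show ?thesis
  proof cases
    case 1
    then show ?thesis by (simp add: inversions_append power_add ac_simps)
  next
    case 2
    have "q 1 2 ^ inversions (A @ x # B) * q 2 1 ^ inversions (v @ [x]) =
          q 1 2 ^ inversions (A @ B) * q 2 1 ^ inversions v * q 2 1 ^ count_list B 1 *
          (q 1 2 ^ count_list A 1 * q 2 1 ^ count_list A 1)"
      using 2 v by (simp add: inversions_append power_add algebra_simps)
    then show ?thesis using 2 cancel by (simp add: ac_simps)
  qed
qed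

lemma symm_coef_snoc_term:
  fixes q :: "nat \<Rightarrow> nat \<Rightarrow> 'a::field"
  assumes ql: "q 1 2 * q 2 1 = 1" and w: "w \<in> words (Suc n)" and j: "j \<le> n"
    and x: "x \<in> letters" and wj: "w ! j = x"
    and IH: "symm_coef q n (remove_nth j w) v =
      (if count_list (remove_nth j w) 1 = count_list v 1 \<and> count_list (remove_nth j w) 2 = count_list v 2
       then q 1 2 ^ inversions (remove_nth j w) * q 2 1 ^ inversions v * K else 0)"
  shows "(\<Prod>i\<in>{j..<n}. q (w ! j) (w ! Suc i)) * symm_coef q n (remove_nth j w) v =
    (if count_list w 1 = count_list (v @ [x]) 1 \<and> count_list w 2 = count_list (v @ [x]) 2
     then q 1 2 ^ inversions w * q 2 1 ^ inversions (v @ [x]) * K *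
          q x x ^ count_list (drop (Suc j) w) x
     else 0)"
proof -
  define A where "A = take j w"
  define B where "B = drop (Suc j) w"
  have w_len: "length w = Suc n" and w_letters: "set w \<subseteq> letters"
    using w by (auto simp: words_def)
  have w_eq: "w = A @ x # B"
    using id_take_nth_drop[of j w] w_len j wj by (simp add: A_def B_def)
  have rem_eq: "remove_nth j w = A @ B" by (simp add: remove_nth_def A_def B_def)
  have prod_eq: "(\<Prod>i\<in>{j..<n}. q (w ! j) (w ! Suc i)) = q x 1 ^ count_list B 1 * q x 2 ^ count_list B 2"
    using prod_nth_Suc_eq_prod_list_drop[OF w_len j, of "q x"]
      prod_list_map_letters[of B "q x"] w_letters wj
    by (simp add: B_def set_drop_subset[THEN subset_trans])
  have counts: "count_list w k = count_list (A @ B) k + (if x = k then 1 else 0)" for k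
    by (simp add: w_eq)
  show ?thesis
  proof (cases "count_list w 1 = count_list (v @ [x]) 1 \<and> count_list w 2 = count_list (v @ [x]) 2")
    case True
    then have C: "count_list (A @ B) 1 = count_list v 1 \<and> count_list (A @ B) 2 = count_list v 2"
      using counts[of 1] counts[of 2] by (auto split: if_splits)
    have "(\<Prod>i\<in>{j..<n}. q (w ! j) (w ! Suc i)) * symm_coef q n (remove_nth j w) v =
        q x 1 ^ count_list B 1 * q x 2 ^ count_list B 2 *
          (q 1 2 ^ inversions (A @ B) * q 2 1 ^ inversions v) * K"
      unfolding IH unfolding prod_eq rem_eq using C by (simp add: ac_simps)
    also have "\<dots> = q 1 2 ^ inversions (A @ x # B) * q 2 1 ^ inversions (v @ [x]) * K *
          q x x ^ count_list B x"
      using braid_factor_move_letter[OF ql x, of v A B] C by (simp add: ac_simps)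
    also have "\<dots> = q 1 2 ^ inversions w * q 2 1 ^ inversions (v @ [x]) * K *
          q x x ^ count_list (drop (Suc j) w) x"
      by (simp only: w_eq[symmetric] B_def[symmetric])
    finally show ?thesis using True by simp
  next
    case False
    then have "\<not> (count_list (A @ B) 1 = count_list v 1 \<and> count_list (A @ B) 2 = count_list v 2)"
      using counts[of 1] counts[of 2] by (auto split: if_splits)
    then have "symm_coef q n (remove_nth j w) v = 0" using IH unfolding rem_eq by argo
    then show ?thesis by (simp only: if_not_P[OF False] mult_zero_right)
  qed
qed

lemma symm_coef_closed_form:
  fixes q :: "nat \<Rightarrow> nat \<Rightarrow> 'a::field"
  assumes ql: "q 1 2 * q 2 1 = 1"
  shows "w \<in> words n \<Longrightarrow> v \<in> words n \<Longrightarrow> symm_coef q n w v =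
     (if count_list w 1 = count_list v 1 \<and> count_list w 2 = count_list v 2
      then q 1 2 ^ inversions w * q 2 1 ^ inversions v * bideg_qfact q (count_list v 2) (count_list v 1)
      else 0)"
proof (induction n arbitrary: w v)
  case 0
  then have "w = []" "v = []" by (auto simp: words_def)
  moreover have "{t. t permutes {..<0::nat}} = {id}" by auto
  ultimately show ?case by (simp add: symm_coef_def braid_coef_def permute_word_def bideg_qfact_def)
next
  case (Suc n)
  obtain v0 x where v: "v = v0 @ [x]" "v0 \<in> words n" "x \<in> letters"
    using words_Suc_snocE[OF Suc.prems(2)] .
  have w_len: "length w = Suc n"
    using Suc.prems by (auto simp: words_def)
  let ?C = "count_list w 1 = count_list v 1 \<and> count_list w 2 = count_list v 2"
  let ?K = "q 1 2 ^ inversions w * q 2 1 ^ inversions v *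
            bideg_qfact q (count_list v0 2) (count_list v0 1)"
  have summand: "(if w ! j = x
               then (\<Prod>i\<in>{j..<n}. q (w ! j) (w ! Suc i)) * symm_coef q n (remove_nth j w) v0 else 0) =
      (if ?C then ?K * (if w ! j = x then q x x ^ count_list (drop (Suc j) w) x else 0) else 0)"
    if j: "j \<le> n" for j
    using symm_coef_snoc_term[OF ql Suc.prems(1) j v(3) _ Suc.IH[OF remove_nth_in_words v(2)]]
      Suc.prems(1) j
    unfolding v(1) by (cases "w ! j = x") (simp_all add: ac_simps)
  have "symm_coef q (Suc n) w v =
      (\<Sum>j\<le>n. if w ! j = x
               then (\<Prod>i\<in>{j..<n}. q (w ! j) (w ! Suc i)) * symm_coef q n (remove_nth j w) v0 else 0)"
    using symm_coef_snoc[OF w_len, of q v0 x] v(1) by simp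
  also have "\<dots> =
      (\<Sum>j<length w. if ?C then ?K * (if w ! j = x then q x x ^ count_list (drop (Suc j) w) x else 0)
                      else 0)"
  proof (rule sum.cong)
    show "{..n} = {..<length w}" using w_len by auto
  qed (rule summand, use w_len in simp)
  also have "\<dots> = (if ?C then ?K * q_int (q x x) (count_list w x) else 0)"
  proof (cases ?C)
    case True
    show ?thesis by (simp only: if_P[OF True] sum_distrib_left[symmetric] sum_positions_q_int)
  next
    case False
    show ?thesis by (simp only: if_not_P[OF False] sum.neutral_const)
  qed
  also have "\<dots> = (if ?C then q 1 2 ^ inversions w * q 2 1 ^ inversions v *
                          bideg_qfact q (count_list v 2) (count_list v 1) else 0)"
    using v(1,3) by (auto simp: letters_def bideg_qfact_def q_fact_Suc ac_simps)
  finally show ?case .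
qed

section \<open>The quantum-plane coefficients\<close>

lemma tensor_alg_tadd: "f \<in> tensor_alg \<Longrightarrow> g \<in> tensor_alg \<Longrightarrow> tadd f g \<in> tensor_alg"
proof -
  assume f: "f \<in> tensor_alg" and g: "g \<in> tensor_alg"
  have "{w. tadd f g w \<noteq> 0} \<subseteq> {w. f w \<noteq> 0} \<union> {w. g w \<noteq> 0}" by (auto simp: tadd_def)
  with f g show ?thesis
    by (auto simp: tensor_alg_def tadd_def intro: finite_subset)
qed

lemma tensor_alg_tsmult: "f \<in> tensor_alg \<Longrightarrow> tsmult c f \<in> tensor_alg"
proof -
  assume f: "f \<in> tensor_alg"
  have "{w. tsmult c f w \<noteq> 0} \<subseteq> {w. f w \<noteq> 0}" by (auto simp: tsmult_def)
  with f show ?thesis by (auto simp: tensor_alg_def tsmult_def intro: finite_subset)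
qed

lemma tensor_alg_diff: "f \<in> tensor_alg \<Longrightarrow> g \<in> tensor_alg \<Longrightarrow> (\<lambda>w. f w - g w) \<in> tensor_alg"
  using tensor_alg_tadd[OF _ tensor_alg_tsmult, of f g "-1"] by (simp add: tadd_def tsmult_def)

lemma tensor_alg_tmult: "f \<in> tensor_alg \<Longrightarrow> g \<in> tensor_alg \<Longrightarrow> tmult f g \<in> tensor_alg"
proof -
  assume f: "f \<in> tensor_alg" and g: "g \<in> tensor_alg"
  have split: "\<exists>k. f (take k w) \<noteq> 0 \<and> g (drop k w) \<noteq> 0" if "tmult f g w \<noteq> 0" for w
  proof (rule ccontr)
    assume "\<not> ?thesis"
    then have "tmult f g w = 0" unfolding tmult_def by (intro sum.neutral) auto
    then show False using that by simp
  qed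
  have "{w. tmult f g w \<noteq> 0} \<subseteq> (\<lambda>(u, u'). u @ u') ` ({u. f u \<noteq> 0} \<times> {u. g u \<noteq> 0})"
  proof
    fix w assume "w \<in> {w. tmult f g w \<noteq> 0}"
    then have "tmult f g w \<noteq> 0" by simp
    then obtain k where "f (take k w) \<noteq> 0" "g (drop k w) \<noteq> 0" using split by blast
    then show "w \<in> (\<lambda>(u, u'). u @ u') ` ({u. f u \<noteq> 0} \<times> {u. g u \<noteq> 0})"
      by (intro image_eqI[of _ _ "(take k w, drop k w)"]) auto
  qed
  moreover have "finite ((\<lambda>(u, u'). u @ u') ` ({u. f u \<noteq> 0} \<times> {u. g u \<noteq> 0}))"
    using f g by (simp add: tensor_alg_def)
  ultimately have "finite {w. tmult f g w \<noteq> 0}" by (rule finite_subset)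
  moreover have "set w \<subseteq> letters" if nonzero: "tmult f g w \<noteq> 0" for w
  proof -
    obtain k where "f (take k w) \<noteq> 0" "g (drop k w) \<noteq> 0" using split[OF nonzero] by blast
    then have "set (take k w) \<subseteq> letters" "set (drop k w) \<subseteq> letters"
      using f g by (auto simp: tensor_alg_def)
    then show ?thesis by (metis append_take_drop_id set_append Un_subset_iff)
  qed
  ultimately show ?thesis by (simp add: tensor_alg_def)
qed

lemma tensor_alg_tcomm: "f \<in> tensor_alg \<Longrightarrow> g \<in> tensor_alg \<Longrightarrow> tcomm f g \<in> tensor_alg"
  using tensor_alg_diff[OF tensor_alg_tmult tensor_alg_tmult] by (simp add: tcomm_def)

lemma tensor_alg_mono: "set u \<subseteq> letters \<Longrightarrow> mono u \<in> tensor_alg"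
proof -
  assume u: "set u \<subseteq> letters"
  have "{w. mono u w \<noteq> (0::'a)} \<subseteq> {u}" by (auto simp: mono_def)
  then show "mono u \<in> tensor_alg" using u finite_subset by (auto simp: tensor_alg_def mono_def)
qed

lemma lie_gen_subset_tensor_alg: "g \<in> lie_gen \<Longrightarrow> g \<in> tensor_alg"
  by (induction rule: lie_gen.induct)
    (auto simp: gen_def intro: tensor_alg_mono tensor_alg_tadd tensor_alg_tsmult tensor_alg_tcomm)

lemma tspan_subset_tensor_alg:
  assumes "S \<subseteq> tensor_alg"
  shows "x \<in> tspan S \<Longrightarrow> x \<in> tensor_alg"
proof (induction rule: tspan.induct)
  case zero
  then show ?case by (simp add: tensor_alg_def tzero_def)
next
  case (step a s c)
  then show ?case using tensor_alg_tadd tensor_alg_tsmult assms by blast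
qed

lemma finite_words: "finite (words n)"
proof -
  have "finite {xs. set xs \<subseteq> letters \<and> length xs = n}"
    by (rule finite_lists_length_eq) (simp add: letters_def)
  then show ?thesis unfolding words_def by (simp add: conj_commute)
qed

lemma permute_word_in_words:
  assumes w: "w \<in> words n" and t: "t permutes {..<n}"
  shows "permute_word n t w \<in> words n"
  using permutes_in_image[OF t] w by (auto simp: words_def permute_word_def)

lemma symm_coef_eq_0_if_notin_words:
  "w \<in> words n \<Longrightarrow> v \<notin> words n \<Longrightarrow> symm_coef q n w v = 0"
  unfolding symm_coef_def using permute_word_in_words by (intro sum.neutral) fastforce

definition words_bideg :: "nat \<Rightarrow> nat \<Rightarrow> nat list set" where
  "words_bideg a b = {w. set w \<subseteq> letters \<and> count_list w 2 = a \<and> count_list w 1 = b}"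

lemma words_bideg_subset_words: "words_bideg a b \<subseteq> words (a + b)"
  using count_list_letters by (fastforce simp: words_bideg_def words_def)

lemma finite_words_bideg: "finite (words_bideg a b)"
  using finite_subset[OF words_bideg_subset_words finite_words] .

text \<open>The coefficient of \<open>x\<^sub>2^a x\<^sub>1^b\<close> in the image of \<open>f\<close> in the quantum plane
  \<open>x\<^sub>1 x\<^sub>2 = p\<^sub>1\<^sub>2 x\<^sub>2 x\<^sub>1\<close>.\<close>

definition qplane_coef :: "(nat \<Rightarrow> nat \<Rightarrow> 'a::field) \<Rightarrow> 'a tens \<Rightarrow> nat \<Rightarrow> nat \<Rightarrow> 'a" where
  "qplane_coef q f a b = (\<Sum>w\<in>words_bideg a b. f w * q 1 2 ^ inversions w)"

text \<open>By the closed form of the symmetrizer, its component of bidegree \<open>(a, b)\<close> is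
  \<open>bideg_qfact q a b\<close> times a multiple of the quantum-plane coefficient.\<close>

lemma nichols_idealI:
  fixes q :: "nat \<Rightarrow> nat \<Rightarrow> 'a::field"
  assumes ql: "q 1 2 * q 2 1 = 1" and f: "f \<in> tensor_alg"
    and coef: "\<And>a b. bideg_qfact q a b \<noteq> 0 \<Longrightarrow> qplane_coef q f a b = 0"
  shows "f \<in> nichols_ideal q"
  unfolding nichols_ideal_def
proof (intro CollectI conjI allI f ext)
  fix n v
  show "symmetrizer q n f v = tzero v"
  proof (cases "v \<in> words n")
    case False
    then show ?thesis
      by (simp add: symmetrizer_eq_sum_symm_coef tzero_def symm_coef_eq_0_if_notin_words)
  next
    case True
    define a where "a = count_list v 2"
    define b where "b = count_list v 1"
    let ?c = "q 2 1 ^ inversions v * bideg_qfact q a b"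
    let ?P = "\<lambda>w. count_list w 1 = count_list v 1 \<and> count_list w 2 = count_list v 2"
    have "symmetrizer q n f v = (\<Sum>w\<in>words n. if ?P w then ?c * (f w * q 1 2 ^ inversions w) else 0)"
      unfolding symmetrizer_eq_sum_symm_coef
      by (intro sum.cong) (auto simp: symm_coef_closed_form[OF ql _ True] a_def b_def ac_simps)
    also have "\<dots> = (\<Sum>w\<in>{w \<in> words n. ?P w}. ?c * (f w * q 1 2 ^ inversions w))"
      by (rule sum.inter_filter[symmetric, OF finite_words])
    also have "{w \<in> words n. ?P w} = words_bideg a b"
      using True by (auto simp: words_bideg_def words_def a_def b_def) (metis count_list_letters One_nat_def)
    also have "(\<Sum>w\<in>words_bideg a b. ?c * (f w * q 1 2 ^ inversions w)) = ?c * qplane_coef q f a b"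
      by (simp add: qplane_coef_def sum_distrib_left)
    also have "\<dots> = 0" using coef[of a b] by (cases "bideg_qfact q a b = 0") auto
    finally show ?thesis by (simp add: tzero_def)
  qed
qed

lemma bij_betw_split_words_bideg:
  "bij_betw (\<lambda>(w, k). ((count_list (take k w) 2, count_list (take k w) 1), (take k w, drop k w)))
     (SIGMA w:words_bideg a b. {..length w})
     (SIGMA p:{..a} \<times> {..b}. words_bideg (fst p) (snd p) \<times> words_bideg (a - fst p) (b - snd p))"
proof (rule bij_betw_byWitness[where f' = "\<lambda>(p, (u, u')). (u @ u', length u)"])
  show "(\<lambda>(w, k). ((count_list (take k w) 2, count_list (take k w) 1), (take k w, drop k w))) `
      (SIGMA w:words_bideg a b. {..length w}) \<subseteq>
      (SIGMA p:{..a} \<times> {..b}. words_bideg (fst p) (snd p) \<times> words_bideg (a - fst p) (b - snd p))"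
  proof clarsimp
    fix w k assume w: "w \<in> words_bideg a b" and k: "k \<le> length w"
    have "count_list w x = count_list (take k w) x + count_list (drop k w) x" for x
      by (metis append_take_drop_id count_list_append)
    moreover have "set (take k w) \<subseteq> letters" "set (drop k w) \<subseteq> letters"
      using w by (auto simp: words_bideg_def dest: in_set_takeD in_set_dropD)
    ultimately show "count_list (take k w) 2 \<le> a \<and> count_list (take k w) (Suc 0) \<le> b \<and>
        take k w \<in> words_bideg (count_list (take k w) 2) (count_list (take k w) (Suc 0)) \<and>
        drop k w \<in> words_bideg (a - count_list (take k w) 2) (b - count_list (take k w) (Suc 0))"
      using w by (auto simp: words_bideg_def)
  qed
qed (auto simp: words_bideg_def)

text \<open>In the quantum plane \<open>x\<^sub>2^a1 x\<^sub>1^b1 \<cdot> x\<^sub>2^a2 x\<^sub>1^b2 = p\<^sub>1\<^sub>2^(b1 a2) x\<^sub>2^(a1 + a2) x\<^sub>1^(b1 + b2)\<close>.\<close>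

lemma qplane_coef_tmult:
  fixes q :: "nat \<Rightarrow> nat \<Rightarrow> 'a::field"
  shows "qplane_coef q (tmult f g) a b = (\<Sum>a1\<le>a. \<Sum>b1\<le>b.
     q 1 2 ^ (b1 * (a - a1)) * qplane_coef q f a1 b1 * qplane_coef q g (a - a1) (b - b1))"
proof -
  let ?Q = "q 1 2"
  let ?F = "\<lambda>u u'. f u * g u' * ?Q ^ inversions (u @ u')"
  let ?G = "\<lambda>(p :: nat \<times> nat, (u, u')). ?F u u'"
  have "qplane_coef q (tmult f g) a b =
      (\<Sum>w\<in>words_bideg a b. \<Sum>k\<le>length w. f (take k w) * g (drop k w) * ?Q ^ inversions w)"
    by (simp add: qplane_coef_def tmult_def sum_distrib_right)
  also have "\<dots> = (\<Sum>(w, k)\<in>(SIGMA w:words_bideg a b. {..length w}).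
      ?F (take k w) (drop k w))"
    by (subst sum.Sigma) (auto simp: finite_words_bideg)
  also have "\<dots> = (\<Sum>x\<in>(SIGMA w:words_bideg a b. {..length w}).
      ?G ((\<lambda>(w, k). ((count_list (take k w) 2, count_list (take k w) 1), (take k w, drop k w))) x))"
    by (rule sum.cong) auto
  also have "\<dots> = (\<Sum>x\<in>(SIGMA p:{..a} \<times> {..b}.
      words_bideg (fst p) (snd p) \<times> words_bideg (a - fst p) (b - snd p)). ?G x)"
    by (rule sum.reindex_bij_betw[OF bij_betw_split_words_bideg])
  also have "\<dots> = (\<Sum>p\<in>{..a} \<times> {..b}.
      \<Sum>(u, u')\<in>words_bideg (fst p) (snd p) \<times> words_bideg (a - fst p) (b - snd p). ?F u u')"
    by (rule sum.Sigma[symmetric]) (auto simp: finite_words_bideg)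
  also have "\<dots> = (\<Sum>p\<in>{..a} \<times> {..b}. ?Q ^ (snd p * (a - fst p)) *
      qplane_coef q f (fst p) (snd p) * qplane_coef q g (a - fst p) (b - snd p))"
  proof (rule sum.cong[OF refl])
    fix p :: "nat \<times> nat"
    have "(\<Sum>(u, u')\<in>words_bideg (fst p) (snd p) \<times> words_bideg (a - fst p) (b - snd p). ?F u u') =
      (\<Sum>u\<in>words_bideg (fst p) (snd p). \<Sum>u'\<in>words_bideg (a - fst p) (b - snd p).
        ?Q ^ (snd p * (a - fst p)) * (f u * ?Q ^ inversions u) * (g u' * ?Q ^ inversions u'))"
      unfolding sum.cartesian_product[symmetric]
      by (intro sum.cong refl) (auto simp: words_bideg_def inversions_append power_add ac_simps)
    then show "(\<Sum>(u, u')\<in>words_bideg (fst p) (snd p) \<times> words_bideg (a - fst p) (b - snd p). ?F u u') =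
      ?Q ^ (snd p * (a - fst p)) *
        qplane_coef q f (fst p) (snd p) * qplane_coef q g (a - fst p) (b - snd p)"
      by (simp add: qplane_coef_def sum_distrib_left sum_distrib_right ac_simps)
  qed
  also have "\<dots> = (\<Sum>a1\<le>a. \<Sum>b1\<le>b.
     ?Q ^ (b1 * (a - a1)) * qplane_coef q f a1 b1 * qplane_coef q g (a - a1) (b - b1))"
    by (simp add: sum.cartesian_product split_def)
  finally show ?thesis .
qed

lemma qplane_coef_tadd: "qplane_coef q (tadd f g) a b = qplane_coef q f a b + qplane_coef q g a b"
  by (simp add: qplane_coef_def tadd_def sum.distrib distrib_right)

lemma qplane_coef_tsmult: "qplane_coef q (tsmult c f) a b = c * qplane_coef q f a b"
  by (simp add: qplane_coef_def tsmult_def sum_distrib_left ac_simps)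

lemma qplane_coef_diff:
  "qplane_coef q (\<lambda>w. f w - g w) a b = qplane_coef q f a b - qplane_coef q g a b"
  by (simp add: qplane_coef_def sum_subtractf left_diff_distrib)

lemma qplane_coef_sum:
  "qplane_coef q (\<lambda>w. \<Sum>d\<in>D. c d * e d w) a b = (\<Sum>d\<in>D. c d * qplane_coef q (e d) a b)"
  unfolding qplane_coef_def
  by (simp add: sum_distrib_right sum_distrib_left ac_simps sum.swap[of _ D])

lemma qplane_coef_mono:
  "qplane_coef q (mono u) a b = (if u \<in> words_bideg a b then q 1 2 ^ inversions u else 0)"
proof -
  have "qplane_coef q (mono u) a b = (\<Sum>w\<in>words_bideg a b. if w = u then q 1 2 ^ inversions w else 0)"
    unfolding qplane_coef_def mono_def by (intro sum.cong refl) simp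
  then show ?thesis by (simp add: sum.delta[OF finite_words_bideg])
qed

lemma sum_atMost_rev: "(\<Sum>i\<le>a. h i) = (\<Sum>i\<le>a. h (a - i :: nat))"
  by (rule sum.reindex_bij_witness[of _ "\<lambda>i. a - i" "\<lambda>i. a - i"]) auto

lemma qplane_coef_tcomm:
  fixes q :: "nat \<Rightarrow> nat \<Rightarrow> 'a::field"
  shows "qplane_coef q (tcomm f g) a b = (\<Sum>a1\<le>a. \<Sum>b1\<le>b.
     (q 1 2 ^ (b1 * (a - a1)) - q 1 2 ^ ((b - b1) * a1)) *
       qplane_coef q f a1 b1 * qplane_coef q g (a - a1) (b - b1))"
proof -
  have "qplane_coef q (tmult g f) a b = (\<Sum>a1\<le>a. \<Sum>b1\<le>b.
     q 1 2 ^ ((b - b1) * (a - (a - a1))) * qplane_coef q g (a - a1) (b - b1) *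
       qplane_coef q f (a - (a - a1)) (b - (b - b1)))"
    by (subst qplane_coef_tmult, subst sum_atMost_rev, subst sum_atMost_rev) (rule refl)
  also have "\<dots> = (\<Sum>a1\<le>a. \<Sum>b1\<le>b.
     q 1 2 ^ ((b - b1) * a1) * qplane_coef q f a1 b1 * qplane_coef q g (a - a1) (b - b1))"
    by (intro sum.cong refl) (simp add: ac_simps)
  finally show ?thesis
    by (simp add: tcomm_def qplane_coef_diff qplane_coef_tmult left_diff_distrib sum_subtractf)
qed

section \<open>Bidegrees of Lie elements\<close>

definition lie_bideg :: "'a::field \<Rightarrow> nat \<Rightarrow> nat \<Rightarrow> bool" where
  "lie_bideg Q a b \<longleftrightarrow>
     (a = 1 \<and> b = 0) \<or> (a = 0 \<and> b = 1) \<or> (1 \<le> a \<and> 1 \<le> b \<and> \<not> (Q ^ a = 1 \<and> Q ^ b = 1))"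

text \<open>If \<open>Q^a = Q^b = 1\<close>, then \<open>Q^(b1 (a - a1)) = Q^(-b1 a1) = Q^((b - b1) a1)\<close>.\<close>

lemma q_commutator_coef_eq_0:
  fixes Q :: "'a::field"
  assumes Q: "Q \<noteq> 0" and not_lie: "\<not> lie_bideg Q a b" and a1: "a1 \<le> a" and b1: "b1 \<le> b"
  shows "Q ^ (b1 * (a - a1)) - Q ^ ((b - b1) * a1) = 0"
proof -
  consider "b = 0" | "a = 0" | "Q ^ a = 1" "Q ^ b = 1"
    using not_lie by (auto simp: lie_bideg_def)
  then show ?thesis
  proof cases
    case 3
    have "Q ^ (b1 * (a - a1)) * Q ^ (b1 * a1) = (Q ^ a) ^ b1"
      "Q ^ ((b - b1) * a1) * Q ^ (b1 * a1) = (Q ^ b) ^ a1"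
      using a1 b1 by (simp_all add: power_add[symmetric] power_mult[symmetric] algebra_simps)
    then have "Q ^ (b1 * (a - a1)) * Q ^ (b1 * a1) = Q ^ ((b - b1) * a1) * Q ^ (b1 * a1)"
      using 3 by simp
    then show ?thesis using Q by simp
  qed (use a1 b1 in simp_all)
qed

lemma lie_gen_qplane_coef_eq_0:
  fixes q :: "nat \<Rightarrow> nat \<Rightarrow> 'a::field"
  assumes Q: "q 1 2 \<noteq> 0"
  shows "g \<in> lie_gen \<Longrightarrow> \<not> lie_bideg (q 1 2) a b \<Longrightarrow> qplane_coef q g a b = 0"
proof (induction g arbitrary: a b rule: lie_gen.induct)
  case (gen i)
  then show ?case
    by (auto simp: gen_def qplane_coef_mono words_bideg_def letters_def lie_bideg_def)
next
  case (add x y)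
  then show ?case by (simp add: qplane_coef_tadd)
next
  case (smult x c)
  then show ?case by (simp add: qplane_coef_tsmult)
next
  case (comm x y)
  show ?case unfolding qplane_coef_tcomm
    using q_commutator_coef_eq_0[OF Q comm.prems] by (intro sum.neutral ballI) auto
qed

definition qplane_monomial :: "(nat \<Rightarrow> nat \<Rightarrow> 'a::field) \<Rightarrow> 'a tens \<Rightarrow> nat \<Rightarrow> nat \<Rightarrow> 'a \<Rightarrow> bool" where
  "qplane_monomial q f a b c \<longleftrightarrow>
     (\<forall>a' b'. qplane_coef q f a' b' = (if a' = a \<and> b' = b then c else 0))"

lemma sum_atMost_delta2:
  fixes a b a1 b1 :: nat
  shows "(\<Sum>x\<le>a. \<Sum>y\<le>b. if x = a1 \<and> y = b1 then K else 0) = (if a1 \<le> a \<and> b1 \<le> b then K else 0)"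
proof -
  have "(\<Sum>y\<le>b. if x = a1 \<and> y = b1 then K else 0) = (if x = a1 then (if b1 \<le> b then K else 0) else 0)"
    for x
    by (cases "x = a1") (simp_all add: sum.delta)
  then show ?thesis by (simp add: sum.delta)
qed

lemma qplane_monomial_tcomm:
  fixes q :: "nat \<Rightarrow> nat \<Rightarrow> 'a::field"
  assumes f: "qplane_monomial q f a1 b1 c" and g: "qplane_monomial q g a2 b2 d"
  shows "qplane_monomial q (tcomm f g) (a1 + a2) (b1 + b2)
           ((q 1 2 ^ (b1 * a2) - q 1 2 ^ (a1 * b2)) * c * d)"
  unfolding qplane_monomial_def
proof (intro allI)
  fix a b
  let ?Q = "q 1 2"
  let ?t = "(?Q ^ (b1 * (a - a1)) - ?Q ^ ((b - b1) * a1)) * c *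
            (if a - a1 = a2 \<and> b - b1 = b2 then d else 0)"
  have "qplane_coef q (tcomm f g) a b = (\<Sum>x\<le>a. \<Sum>y\<le>b. if x = a1 \<and> y = b1 then ?t else 0)"
    unfolding qplane_coef_tcomm using f g by (intro sum.cong refl) (auto simp: qplane_monomial_def)
  also have "\<dots> = (if a1 \<le> a \<and> b1 \<le> b then ?t else 0)"
    by (rule sum_atMost_delta2)
  also have "\<dots> = (if a = a1 + a2 \<and> b = b1 + b2 then (?Q ^ (b1 * a2) - ?Q ^ (a1 * b2)) * c * d else 0)"
    by (cases "a = a1 + a2 \<and> b = b1 + b2") (auto simp: ac_simps)
  finally show "qplane_coef q (tcomm f g) a b =
      (if a = a1 + a2 \<and> b = b1 + b2 then (?Q ^ (b1 * a2) - ?Q ^ (a1 * b2)) * c * d else 0)" .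
qed

lemma gen_in_lie_gen: "gen 1 \<in> lie_gen" "gen 2 \<in> lie_gen"
  using lie_gen.gen[of 1] lie_gen.gen[of 2] by (simp_all add: letters_def)

lemma qplane_monomial_gen: "qplane_monomial q (gen 1) 0 1 1" "qplane_monomial q (gen 2) 1 0 1"
  by (auto simp: qplane_monomial_def gen_def qplane_coef_mono words_bideg_def letters_def)

lemma lie_gen_bracket_gen1_iter:
  fixes q :: "nat \<Rightarrow> nat \<Rightarrow> 'a::field"
  assumes "l \<in> lie_gen" "qplane_monomial q l a b c"
  shows "\<exists>l'\<in>lie_gen. qplane_monomial q l' a (b + k) (c * (1 - q 1 2 ^ a) ^ k)"
proof (induction k)
  case (Suc k)
  then obtain l' where l': "l' \<in> lie_gen" "qplane_monomial q l' a (b + k) (c * (1 - q 1 2 ^ a) ^ k)"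
    by blast
  have "tcomm l' (gen 1) \<in> lie_gen" using l'(1) gen_in_lie_gen(1) by (rule lie_gen.comm)
  moreover have "qplane_monomial q (tcomm l' (gen 1)) (a + 0) (b + k + 1)
      ((q 1 2 ^ ((b + k) * 0) - q 1 2 ^ (a * 1)) * (c * (1 - q 1 2 ^ a) ^ k) * 1)"
    using l'(2) qplane_monomial_gen(1) by (rule qplane_monomial_tcomm)
  ultimately show ?case by (auto simp: ac_simps)
qed (use assms in auto)

lemma lie_gen_bracket_gen2_iter:
  fixes q :: "nat \<Rightarrow> nat \<Rightarrow> 'a::field"
  assumes "l \<in> lie_gen" "qplane_monomial q l a b c"
  shows "\<exists>l'\<in>lie_gen. qplane_monomial q l' (a + k) b (c * (1 - q 1 2 ^ b) ^ k)"
proof (induction k)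
  case (Suc k)
  then obtain l' where l': "l' \<in> lie_gen" "qplane_monomial q l' (a + k) b (c * (1 - q 1 2 ^ b) ^ k)"
    by blast
  have "tcomm (gen 2) l' \<in> lie_gen" using gen_in_lie_gen(2) l'(1) by (rule lie_gen.comm)
  moreover have "qplane_monomial q (tcomm (gen 2) l') (1 + (a + k)) (0 + b)
      ((q 1 2 ^ (0 * (a + k)) - q 1 2 ^ (1 * b)) * 1 * (c * (1 - q 1 2 ^ b) ^ k))"
    using qplane_monomial_gen(2) l'(2) by (rule qplane_monomial_tcomm)
  ultimately show ?case by (auto simp: ac_simps)
qed (use assms in auto)

text \<open>If \<open>Q^b \<noteq> 1\<close>, bracket \<open>x\<^sub>2\<close> with \<open>x\<^sub>1\<close> from the right \<open>b\<close> times, then with \<open>x\<^sub>2\<close> from the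
  left \<open>a - 1\<close> times; symmetrically if \<open>Q^a \<noteq> 1\<close>.  Each bracket multiplies by a factor
  \<open>1 - Q\<close>, \<open>1 - Q^b\<close> (resp. \<open>1 - Q^a\<close>), all nonzero.\<close>

lemma lie_gen_qplane_monomial_exists:
  fixes q :: "nat \<Rightarrow> nat \<Rightarrow> 'a::field"
  assumes a: "1 \<le> a" and b: "1 \<le> b" and not_root: "\<not> (q 1 2 ^ a = 1 \<and> q 1 2 ^ b = 1)"
  shows "\<exists>l\<in>lie_gen. \<exists>c. c \<noteq> 0 \<and> qplane_monomial q l a b c"
proof (cases "q 1 2 ^ b = 1")
  case False
  obtain l1 where "l1 \<in> lie_gen" "qplane_monomial q l1 1 (0 + b) (1 * (1 - q 1 2 ^ 1) ^ b)"
    using lie_gen_bracket_gen1_iter[OF gen_in_lie_gen(2) qplane_monomial_gen(2)] by blast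
  then obtain l2 where "l2 \<in> lie_gen" "qplane_monomial q l2 (1 + (a - 1)) (0 + b)
      (1 * (1 - q 1 2 ^ 1) ^ b * (1 - q 1 2 ^ (0 + b)) ^ (a - 1))"
    using lie_gen_bracket_gen2_iter by blast
  moreover have "q 1 2 \<noteq> 1" using False by auto
  ultimately show ?thesis
    using a False by (intro bexI[of _ l2] exI[of _ "(1 - q 1 2) ^ b * (1 - q 1 2 ^ b) ^ (a - 1)"]) auto
next
  case True
  then have not_root_a: "q 1 2 ^ a \<noteq> 1" using not_root by auto
  obtain l1 where "l1 \<in> lie_gen" "qplane_monomial q l1 (0 + a) 1 (1 * (1 - q 1 2 ^ 1) ^ a)"
    using lie_gen_bracket_gen2_iter[OF gen_in_lie_gen(1) qplane_monomial_gen(1)] by blast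
  then obtain l2 where "l2 \<in> lie_gen" "qplane_monomial q l2 (0 + a) (1 + (b - 1))
      (1 * (1 - q 1 2 ^ 1) ^ a * (1 - q 1 2 ^ (0 + a)) ^ (b - 1))"
    using lie_gen_bracket_gen1_iter by blast
  moreover have "q 1 2 \<noteq> 1" using not_root_a by auto
  ultimately show ?thesis
    using b not_root_a
    by (intro bexI[of _ l2] exI[of _ "(1 - q 1 2) ^ a * (1 - q 1 2 ^ a) ^ (b - 1)"]) auto
qed

section \<open>Orders of roots of unity\<close>

lemma ordr_eq_enatD:
  assumes "ordr y = enat N"
  shows "0 < N" "y ^ N = 1" "\<And>m. 0 < m \<Longrightarrow> m < N \<Longrightarrow> y ^ m \<noteq> 1"
proof -
  have ex: "\<exists>n>0. y ^ n = 1" using assms by (auto simp: ordr_def split: if_splits)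
  then have N: "N = (LEAST n. n > 0 \<and> y ^ n = 1)" using assms by (simp add: ordr_def)
  show "0 < N" "y ^ N = 1" using LeastI_ex[OF ex] N by auto
  show "\<And>m. 0 < m \<Longrightarrow> m < N \<Longrightarrow> y ^ m \<noteq> 1" using not_less_Least N by blast
qed

lemma ord_dvd_iff_power_eq_1:
  fixes y :: "'a::field"
  assumes k: "0 < k"
  shows "ord_dvd y k \<longleftrightarrow> y ^ k = 1"
proof (cases "\<exists>n>0. y ^ n = 1")
  case False
  then have "y ^ k \<noteq> 1" using k by blast
  moreover have "ordr y = \<infinity>" using False by (simp add: ordr_def)
  ultimately show ?thesis by (simp add: ord_dvd_def)
next
  case True
  then obtain N where N: "ordr y = enat N" by (simp add: ordr_def)
  note ord = ordr_eq_enatD[OF N]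
  show ?thesis
  proof
    assume "ord_dvd y k"
    then obtain m where "k = N * m" using N by (auto simp: ord_dvd_def)
    then show "y ^ k = 1" using ord(2) by (simp add: power_mult)
  next
    assume power: "y ^ k = 1"
    have "k = N * (k div N) + k mod N" by simp
    then have "y ^ k = (y ^ N) ^ (k div N) * y ^ (k mod N)" by (metis power_add power_mult)
    then have "y ^ (k mod N) = 1" using power ord(2) by simp
    then have "k mod N = 0" using ord(3)[of "k mod N"] ord(1) by (meson mod_less_divisor not_gr0)
    then show "ord_dvd y k" using N by (auto simp: ord_dvd_def)
  qed
qed

text \<open>\<open>[N]\<^sub>y = 0\<close> when \<open>1 < N = ord y < \<infinity>\<close>, so a nonzero \<open>[k]\<^sub>y!\<close> forces \<open>k < N\<close>.\<close>

lemma q_fact_neq_0_imp_less_Nbound: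
  fixes y :: "'a::field"
  assumes nonzero: "q_fact y k \<noteq> 0"
  shows "enat k < Nbound y"
proof (rule ccontr)
  assume not_less: "\<not> enat k < Nbound y"
  then have bounded: "1 < ordr y \<and> ordr y < \<infinity>" by (auto simp: Nbound_def split: if_splits)
  then obtain N where N: "ordr y = enat N" by (cases "ordr y") auto
  have N_gt_1: "1 < N" using bounded N by (simp add: one_enat_def)
  have N_le: "N \<le> k" using not_less N bounded by (simp add: Nbound_def)
  note ord = ordr_eq_enatD[OF N]
  have "y \<noteq> 1" using ord(3)[of 1] N_gt_1 by auto
  then have "q_int y N = 0" using ord(2) by (simp add: q_int_def sum_gp_strict)
  moreover have "N \<in> {1..k}" using N_gt_1 N_le by simp
  ultimately have "q_fact y k = 0" unfolding q_fact_def by (intro prod_zero) auto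
  then show False using nonzero by simp
qed

section \<open>The spanning set modulo the Nichols ideal\<close>

lemma symmetrizer_tadd:
  "symmetrizer q n (tadd f g) = (\<lambda>v. symmetrizer q n f v + symmetrizer q n g v)"
  by (simp add: symmetrizer_def tadd_def distrib_right sum.distrib)

lemma symmetrizer_tsmult: "symmetrizer q n (tsmult c f) = (\<lambda>v. c * symmetrizer q n f v)"
  by (simp add: symmetrizer_def tsmult_def sum_distrib_left mult.assoc)

lemma nichols_ideal_tadd: "f \<in> nichols_ideal q \<Longrightarrow> g \<in> nichols_ideal q \<Longrightarrow> tadd f g \<in> nichols_ideal q"
  by (auto simp: nichols_ideal_def tensor_alg_tadd symmetrizer_tadd tzero_def)

lemma nichols_ideal_tsmult: "f \<in> nichols_ideal q \<Longrightarrow> tsmult c f \<in> nichols_ideal q"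
  by (auto simp: nichols_ideal_def tensor_alg_tsmult symmetrizer_tsmult tzero_def)

lemma tzero_in_nichols_ideal: "tzero \<in> nichols_ideal q"
  by (simp add: nichols_ideal_def tensor_alg_def symmetrizer_def tzero_def)

abbreviation sorted_mono :: "nat \<Rightarrow> nat \<Rightarrow> 'a::field tens" where
  "sorted_mono a b \<equiv> mono (replicate a 2 @ replicate b 1)"

lemma inversions_replicate: "inversions (replicate n c) = 0"
  by (induction n) (auto simp: count_list_0_iff)

lemma count_list_replicate: "count_list (replicate n x) y = (if x = y then n else 0)"
  by (induction n) auto

lemma qplane_monomial_sorted_mono: "qplane_monomial q (sorted_mono a b) a b 1"
proof -
  have "replicate a 2 @ replicate b 1 \<in> words_bideg a' b' \<longleftrightarrow> a' = a \<and> b' = b" for a' b'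
    by (auto simp: words_bideg_def letters_def count_list_replicate)
  then show ?thesis
    by (simp add: qplane_monomial_def qplane_coef_mono inversions_append inversions_replicate)
qed

lemma sorted_mono_in_qls_spanning_set:
  fixes q :: "nat \<Rightarrow> nat \<Rightarrow> 'a::field"
  assumes lie: "lie_bideg (q 1 2) a b" and nonzero: "bideg_qfact q a b \<noteq> 0"
  shows "sorted_mono a b \<in> qls_spanning_set q"
proof -
  have bounds: "enat a < Nbound (q 2 2)" "enat b < Nbound (q 1 1)"
    using nonzero by (auto simp: bideg_qfact_def intro!: q_fact_neq_0_imp_less_Nbound)
  consider "a = 1" "b = 0" | "a = 0" "b = 1" | "1 \<le> a" "1 \<le> b" "\<not> (q 1 2 ^ a = 1 \<and> q 1 2 ^ b = 1)"
    using lie unfolding lie_bideg_def by blast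
  then show ?thesis
  proof cases
    case 3
    then have "\<not> ord_dvd (q 1 2) a \<or> \<not> ord_dvd (q 1 2) b"
      using ord_dvd_iff_power_eq_1[of a "q 1 2"] ord_dvd_iff_power_eq_1[of b "q 1 2"] by auto
    then show ?thesis using 3 bounds unfolding qls_spanning_set_def by blast
  qed (simp_all add: qls_spanning_set_def gen_def)
qed

lemma qls_spanning_set_subset_tensor_alg: "qls_spanning_set q \<subseteq> tensor_alg"
  by (auto simp: qls_spanning_set_def gen_def letters_def intro!: tensor_alg_mono)

lemma finite_qplane_coef_support:
  assumes "f \<in> tensor_alg"
  shows "finite {(a, b). qplane_coef q f a b \<noteq> 0}"
proof -
  have "{(a, b). qplane_coef q f a b \<noteq> 0} \<subseteq> (\<lambda>w. (count_list w 2, count_list w 1)) ` {w. f w \<noteq> 0}"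
  proof clarify
    fix a b assume nonzero: "qplane_coef q f a b \<noteq> 0"
    have "\<exists>w\<in>words_bideg a b. f w \<noteq> 0"
    proof (rule ccontr)
      assume "\<not> ?thesis"
      then have "qplane_coef q f a b = 0" unfolding qplane_coef_def by (intro sum.neutral) auto
      with nonzero show False by simp
    qed
    then show "(a, b) \<in> (\<lambda>w. (count_list w 2, count_list w 1)) ` {w. f w \<noteq> 0}"
      by (auto simp: words_bideg_def)
  qed
  moreover have "finite {w. f w \<noteq> 0}" using assms by (simp add: tensor_alg_def)
  ultimately show ?thesis using finite_subset by blast
qed

lemma tspan_sum:
  assumes "finite D" and "\<And>d. d \<in> D \<Longrightarrow> e d \<in> S"
  shows "(\<lambda>w. \<Sum>d\<in>D. c d * e d w) \<in> tspan S"
  using assms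
proof (induction D rule: finite_induct)
  case empty
  then show ?case using tspan.zero by (simp add: tzero_def)
next
  case (insert x F)
  then have "(\<lambda>w. \<Sum>d\<in>insert x F. c d * e d w) = tadd (\<lambda>w. \<Sum>d\<in>F. c d * e d w) (tsmult (c x) (e x))"
    by (simp add: tadd_def tsmult_def add.commute)
  then show ?case using tspan.step[OF insert.IH] insert.prems by simp
qed

text \<open>The witness is the combination of sorted monomials with the quantum-plane coefficients
  of \<open>g\<close> in the bidegrees where \<open>bideg_qfact\<close> does not vanish.\<close>

lemma lie_gen_congruent_tspan:
  fixes q :: "nat \<Rightarrow> nat \<Rightarrow> 'a::field"
  assumes ql: "q 1 2 * q 2 1 = 1" and g: "g \<in> lie_gen"
  shows "\<exists>s\<in>tspan (qls_spanning_set q). (\<lambda>w. g w - s w) \<in> nichols_ideal q"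
proof -
  have g_tensor: "g \<in> tensor_alg" using g by (rule lie_gen_subset_tensor_alg)
  define D where "D = {(a, b). bideg_qfact q a b \<noteq> 0 \<and> qplane_coef q g a b \<noteq> 0}"
  define s where
    "s = (\<lambda>w. \<Sum>d\<in>D. qplane_coef q g (fst d) (snd d) * sorted_mono (fst d) (snd d) w :: 'a)"
  have D_finite: "finite D"
    using finite_qplane_coef_support[OF g_tensor] by (rule rev_finite_subset) (auto simp: D_def)
  have "sorted_mono (fst d) (snd d) \<in> qls_spanning_set q" if d: "d \<in> D" for d
  proof (rule sorted_mono_in_qls_spanning_set)
    show "lie_bideg (q 1 2) (fst d) (snd d)"
      using d lie_gen_qplane_coef_eq_0[OF _ g, of q] ql by (fastforce simp: D_def)
  qed (use d in \<open>auto simp: D_def\<close>)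
  then have s_span: "s \<in> tspan (qls_spanning_set q)"
    unfolding s_def by (rule tspan_sum[OF D_finite])
  have "qplane_coef q (sorted_mono (fst d) (snd d)) a b = (if d = (a, b) then 1 else 0)" for d a b
    using qplane_monomial_sorted_mono[of q "fst d" "snd d"] unfolding qplane_monomial_def by auto
  then have "qplane_coef q s a b = (\<Sum>d\<in>D. if d = (a, b) then qplane_coef q g a b else 0)" for a b
    unfolding s_def qplane_coef_sum by (intro sum.cong refl) simp
  then have "qplane_coef q s a b = (if (a, b) \<in> D then qplane_coef q g a b else 0)" for a b
    by (simp add: sum.delta[OF D_finite])
  then have "(\<lambda>w. g w - s w) \<in> nichols_ideal q"
    using tspan_subset_tensor_alg[OF qls_spanning_set_subset_tensor_alg s_span]
    by (intro nichols_idealI[OF ql tensor_alg_diff[OF g_tensor]]) (auto simp: qplane_coef_diff D_def)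
  with s_span show ?thesis by blast
qed

lemma qls_spanning_set_congruent_lie_gen:
  fixes q :: "nat \<Rightarrow> nat \<Rightarrow> 'a::field"
  assumes ql: "q 1 2 * q 2 1 = 1" and x: "x \<in> qls_spanning_set q"
  shows "\<exists>l\<in>lie_gen. (\<lambda>w. x w - l w) \<in> nichols_ideal q"
proof -
  have self: "(\<lambda>w. x w - x w) \<in> nichols_ideal q"
    using tzero_in_nichols_ideal by (simp add: tzero_def)
  consider "x = gen 1" | "x = gen 2"
    | a b where "x = sorted_mono a b" "1 \<le> a" "1 \<le> b"
        "\<not> ord_dvd (q 1 2) a \<or> \<not> ord_dvd (q 1 2) b"
    using x unfolding qls_spanning_set_def by blast
  then show ?thesis
  proof cases
    case 1
    then show ?thesis using self gen_in_lie_gen by blast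
  next
    case 2
    then show ?thesis using self gen_in_lie_gen by blast
  next
    case 3
    then have "\<not> (q 1 2 ^ a = 1 \<and> q 1 2 ^ b = 1)"
      using ord_dvd_iff_power_eq_1[of a "q 1 2"] ord_dvd_iff_power_eq_1[of b "q 1 2"] by auto
    then obtain l c where l: "l \<in> lie_gen" "c \<noteq> 0" "qplane_monomial q l a b c"
      using lie_gen_qplane_monomial_exists[OF 3(2,3)] by blast
    have x_tensor: "x \<in> tensor_alg" using qls_spanning_set_subset_tensor_alg x by blast
    have "(\<lambda>w. x w - tsmult (inverse c) l w) \<in> nichols_ideal q"
    proof (rule nichols_idealI[OF ql])
      show "(\<lambda>w. x w - tsmult (inverse c) l w) \<in> tensor_alg"
        using x_tensor lie_gen_subset_tensor_alg[OF l(1)] by (intro tensor_alg_diff tensor_alg_tsmult)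
      show "qplane_coef q (\<lambda>w. x w - tsmult (inverse c) l w) a' b' = 0" for a' b'
        using l(2,3) qplane_monomial_sorted_mono[of q a b]
        unfolding 3(1) qplane_coef_diff qplane_coef_tsmult qplane_monomial_def by simp
    qed
    then show ?thesis using lie_gen.smult[OF l(1)] by blast
  qed
qed

lemma tspan_congruent_lie_gen:
  fixes q :: "nat \<Rightarrow> nat \<Rightarrow> 'a::field"
  assumes ql: "q 1 2 * q 2 1 = 1"
  shows "x \<in> tspan (qls_spanning_set q) \<Longrightarrow> \<exists>l\<in>lie_gen. (\<lambda>w. x w - l w) \<in> nichols_ideal q"
proof (induction rule: tspan.induct)
  case zero
  have "tsmult 0 (gen 1) \<in> lie_gen" using gen_in_lie_gen(1) by (rule lie_gen.smult)
  then show ?case using tzero_in_nichols_ideal by (force simp: tzero_def tsmult_def)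
next
  case (step a s c)
  obtain l where l: "l \<in> lie_gen" "(\<lambda>w. a w - l w) \<in> nichols_ideal q"
    using step.IH by blast
  obtain l' where l': "l' \<in> lie_gen" "(\<lambda>w. s w - l' w) \<in> nichols_ideal q"
    using qls_spanning_set_congruent_lie_gen[OF ql step.hyps(2)] by blast
  have "(\<lambda>w. tadd a (tsmult c s) w - tadd l (tsmult c l') w) =
      tadd (\<lambda>w. a w - l w) (tsmult c (\<lambda>w. s w - l' w))"
    by (simp add: tadd_def tsmult_def fun_eq_iff algebra_simps)
  moreover have "tadd l (tsmult c l') \<in> lie_gen"
    using l(1) l'(1) by (intro lie_gen.add lie_gen.smult)
  ultimately show ?case
    using l(2) l'(2) by (metis nichols_ideal_tadd nichols_ideal_tsmult)
qed

lemma mod_nichols_mono: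
  assumes "\<And>a. a \<in> A \<Longrightarrow> \<exists>b\<in>B. (\<lambda>w. a w - b w) \<in> nichols_ideal q"
  shows "mod_nichols q A \<subseteq> mod_nichols q B"
proof
  fix x assume "x \<in> mod_nichols q A"
  then obtain a i where x: "x = tadd a i" "a \<in> A" "i \<in> nichols_ideal q"
    by (auto simp: mod_nichols_def)
  obtain b where b: "b \<in> B" "(\<lambda>w. a w - b w) \<in> nichols_ideal q" using assms x(2) by blast
  have "x = tadd b (tadd (\<lambda>w. a w - b w) i)" using x(1) by (simp add: tadd_def)
  then show "x \<in> mod_nichols q B"
    using b x(3) nichols_ideal_tadd unfolding mod_nichols_def by blast
qed

text \<open>Only \<open>p\<^sub>1\<^sub>2 p\<^sub>2\<^sub>1 = 1\<close> is needed: algebraic closedness, characteristic \<open>0\<close> and the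
  nonvanishing of the \<open>p\<^sub>i\<^sub>j\<close> play no role in this description.\<close>

theorem theorem6p7:
  fixes q :: "nat \<Rightarrow> nat \<Rightarrow> 'a::field_char_0"
  assumes alg_closed: "\<And>p :: 'a poly. degree p > 0 \<Longrightarrow> \<exists>x. poly p x = 0"
    and nonzero: "\<And>i j. i \<in> letters \<Longrightarrow> j \<in> letters \<Longrightarrow> q i j \<noteq> 0"
    and quantum_linear: "q 1 2 * q 2 1 = 1"
  shows "mod_nichols q lie_gen = mod_nichols q (tspan (qls_spanning_set q))"
proof (rule equalityI)
  show "mod_nichols q lie_gen \<subseteq> mod_nichols q (tspan (qls_spanning_set q))"
    using lie_gen_congruent_tspan[OF quantum_linear] by (rule mod_nichols_mono)
  show "mod_nichols q (tspan (qls_spanning_set q)) \<subseteq> mod_nichols q lie_gen"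
    using tspan_congruent_lie_gen[OF quantum_linear] by (rule mod_nichols_mono)
qed

end
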